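(* Let $\tilde V\in C^2(\mathbb{R},\mathbb{R})$ satisfy: $\tilde V\ge 0$, $\tilde V(-1)=\tilde V(1)=0$, $\tilde V(x)>0$ for $x\in(-1,1)$, $\tilde V''(-1)>0$, $\tilde V''(1)>0$, $\tilde V(x)>0$ and $\tilde V'(x)x>0$ for all $|x|>1$, and $\tilde V(x)\to+\infty$ as $|x|\to+\infty$. Let $a:\mathbb{R}\to\mathbb{R}$ be bounded and continuous with $\liminf_{|t|\to\infty}a(t)=a_\infty>\inf_{t\in\mathbb{R}}a(t)=a(0)>0$. Let $$W=\{x\in H^1_{loc}(\mathbb{R}): x+1\in H^1((-\infty,0]),\ x-1\in H^1([0,+\infty))\},$$ and for $\epsilon\ge 0$ let $J_\epsilon(x)=\int_{-\infty}^{+\infty}\left(\frac12|\dot x|^2+a(\epsilon t)\tilde V(x(t))\right)dt$ (so $J_0$ has the constant coefficient $a(0)$), and $J_\infty(x)=\int_{-\infty}^{+\infty}\left(\frac12|\dot x|^2+a_\infty\tilde V(x(t))\right)dt$. Set $\mathcal{B}_\epsilon=\inf_{x\in W}J_\epsilon(x)$, $\mathcal{B}_0=\inf_{x\in W}J_0(x)$, $\mathcal{B}_\infty=\inf_{x\in W}J_\infty(x)$. Then $\mathcal{B}_0<\mathcal{B}_\infty$ and $\lim_{\epsilon\to0}\mathcal{B}_\epsilon=\mathcal{B}_0$. *)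

theory Defs
  imports "HOL-Analysis.Analysis"
begin

text \<open>x is in H^1_loc(R) with (weak) derivative g: g is measurable, locally square
integrable, and x is the indefinite integral of g (continuous representative).\<close>
definition weak_deriv_loc :: "(real \<Rightarrow> real) \<Rightarrow> (real \<Rightarrow> real) \<Rightarrow> bool" where
  "weak_deriv_loc x g \<longleftrightarrow> g \<in> borel_measurable lborel \<and>
     (\<forall>s t. s \<le> t \<longrightarrow> set_integrable lborel {s..t} (\<lambda>u. (g u)\<^sup>2) \<and>
                       x t - x s = (LBINT u=s..t. g u))"

definition inW :: "(real \<Rightarrow> real) \<Rightarrow> (real \<Rightarrow> real) \<Rightarrow> bool" where
  "inW x g \<longleftrightarrow> weak_deriv_loc x g \<and>
     set_integrable lborel {..0} (\<lambda>t. (x t + 1)\<^sup>2) \<and>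
     set_integrable lborel {..0} (\<lambda>t. (g t)\<^sup>2) \<and>
     set_integrable lborel {0..} (\<lambda>t. (x t - 1)\<^sup>2) \<and>
     set_integrable lborel {0..} (\<lambda>t. (g t)\<^sup>2)"

text \<open>The action functional with time-dependent coefficient c (nonnegative integrand,
so the integral is taken in [0,\<infinity>]).\<close>
definition action :: "(real \<Rightarrow> real) \<Rightarrow> (real \<Rightarrow> real) \<Rightarrow> (real \<Rightarrow> real) \<Rightarrow> (real \<Rightarrow> real) \<Rightarrow> ennreal" where
  "action c V x g = (\<integral>\<^sup>+ t. ennreal ((g t)\<^sup>2 / 2 + c t * V (x t)) \<partial>lborel)"

definition Binf :: "(real \<Rightarrow> real) \<Rightarrow> (real \<Rightarrow> real) \<Rightarrow> ennreal" where
  "Binf c V = (INF xg \<in> {(x, g). inW x g}. action c V (fst xg) (snd xg))"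

end

theory Submission
  imports Defs
begin

text \<open>
  Every path in \<open>W\<close> must cross the strip \<open>\<bar>x\<bar> < 1/2\<close> (where \<open>V \<ge> m > 0\<close>) on some
  interval of length \<open>L\<close>; there its kinetic energy is at least \<open>1/(2L)\<close> and its potential
  energy at least \<open>m L\<close>, so kinetic times potential energy is at least \<open>m/2\<close>.
  Near-minimisers of \<open>J\<^sub>\<infinity>\<close> have bounded kinetic energy, hence potential energy bounded
  below, and lowering the coefficient from \<open>a\<^sub>\<infinity>\<close> to \<open>a(0)\<close> saves a fixed amount:
  \<open>\<B>\<^sub>0 < \<B>\<^sub>\<infinity>\<close>. For the limit, \<open>a \<ge> a(0)\<close> gives \<open>\<B>\<^sub>\<epsilon> \<ge> \<B>\<^sub>0\<close>, while for a fixed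
  near-minimiser of \<open>J\<^sub>0\<close> dominated convergence gives \<open>J\<^sub>\<epsilon> \<rightarrow> J\<^sub>0\<close>.
\<close>

lemma emeasure_lborel_atMost: "emeasure lborel {..a::real} = \<infinity>"
proof (rule ccontr)
  assume "emeasure lborel {..a} \<noteq> \<infinity>"
  then obtain n :: nat where n: "emeasure lborel {..a} < of_nat n"
    using ennreal_Ex_less_of_nat top.not_eq_extremum by auto
  have "(of_nat n :: ennreal) = emeasure lborel {a - real n..a}"
    by (simp add: emeasure_lborel_Icc_eq ennreal_of_nat_eq_real_of_nat)
  also have "\<dots> \<le> emeasure lborel {..a}" by (rule emeasure_mono) auto
  finally show False using n by simp
qed

lemma emeasure_lborel_atLeast: "emeasure lborel {a::real..} = \<infinity>"
proof (rule ccontr)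
  assume "emeasure lborel {a..} \<noteq> \<infinity>"
  then obtain n :: nat where n: "emeasure lborel {a..} < of_nat n"
    using ennreal_Ex_less_of_nat top.not_eq_extremum by auto
  have "(of_nat n :: ennreal) = emeasure lborel {a..a + real n}"
    by (simp add: emeasure_lborel_Icc_eq ennreal_of_nat_eq_real_of_nat)
  also have "\<dots> \<le> emeasure lborel {a..}" by (rule emeasure_mono) auto
  finally show False using n by simp
qed

lemma square_integrable_takes_small_values:
  fixes f :: "real \<Rightarrow> real"
  assumes f: "set_integrable lborel A (\<lambda>t. (f t)\<^sup>2)" and A: "A \<in> sets lborel"
    and inf: "emeasure lborel A = \<infinity>" and \<epsilon>: "\<epsilon> > 0"
  shows "\<exists>u\<in>A. \<bar>f u\<bar> < \<epsilon>"
proof (rule ccontr)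
  assume far: "\<not> ?thesis"
  have big: "\<epsilon>\<^sup>2 \<le> (f u)\<^sup>2" if "u \<in> A" for u
  proof -
    have "\<epsilon>\<^sup>2 \<le> \<bar>f u\<bar>\<^sup>2"
      using that \<epsilon> far by (intro power_mono) (auto simp: not_less)
    then show ?thesis by simp
  qed
  have "\<infinity> = ennreal (\<epsilon>\<^sup>2) * emeasure lborel A" using \<epsilon> inf by simp
  also have "\<dots> = (\<integral>\<^sup>+t. ennreal (\<epsilon>\<^sup>2) * indicator A t \<partial>lborel)"
    using A by (simp add: nn_integral_cmult_indicator)
  also have "\<dots> \<le> (\<integral>\<^sup>+t. ennreal (norm (indicator A t *\<^sub>R (f t)\<^sup>2)) \<partial>lborel)"
    by (intro nn_integral_mono) (auto simp: indicator_def intro!: ennreal_leI big)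
  also have "\<dots> < \<infinity>"
    using f unfolding set_integrable_def by (simp add: integrable_iff_bounded)
  finally show False by simp
qed

lemma weak_deriv_loc_measurable:
  "weak_deriv_loc x g \<Longrightarrow> g \<in> borel_measurable borel"
  unfolding weak_deriv_loc_def by simp

lemma weak_deriv_loc_square_integrable:
  "weak_deriv_loc x g \<Longrightarrow> s \<le> t \<Longrightarrow> set_integrable lborel {s..t} (\<lambda>u. (g u)\<^sup>2)"
  unfolding weak_deriv_loc_def by blast

lemma weak_deriv_loc_integrable:
  assumes "weak_deriv_loc x g" "s \<le> t"
  shows "set_integrable lborel {s..t} g"
proof (rule set_integrable_bound)
  have "set_integrable lborel {s..t} (\<lambda>u. 1::real)"
    by (rule borel_integrable_atLeastAtMost') simp
  then show "set_integrable lborel {s..t} (\<lambda>u. 1 + (g u)\<^sup>2)"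
    using set_integral_add(1) weak_deriv_loc_square_integrable[OF assms] by blast
  show "set_borel_measurable lborel {s..t} g"
    using weak_deriv_loc_measurable[OF assms(1)] by (simp add: set_borel_measurable_def)
  have "\<bar>y\<bar> \<le> 1 + y\<^sup>2" for y :: real
  proof -
    have "0 \<le> (\<bar>y\<bar> - 1)\<^sup>2" by simp
    then show ?thesis by (simp add: power2_eq_square algebra_simps abs_mult_self_eq)
  qed
  then show "AE u in lborel. u \<in> {s..t} \<longrightarrow> norm (g u) \<le> norm (1 + (g u)\<^sup>2)"
    by (intro AE_I2) (auto intro: order_trans)
qed

lemma weak_deriv_loc_diff:
  assumes "weak_deriv_loc x g" "s \<le> t"
  shows "x t - x s = (LINT u:{s..t}|lborel. g u)"
  using assms by (simp add: weak_deriv_loc_def interval_integral_Icc)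

lemma weak_deriv_loc_continuous:
  assumes wd: "weak_deriv_loc x g"
  shows "continuous_on UNIV x"
proof -
  have "isCont x z" for z
  proof -
    have gi: "g integrable_on {z - 1..z + 1}"
      using weak_deriv_loc_integrable[OF wd] by (intro set_borel_integral_eq_integral(1)) simp
    have "continuous_on {z - 1..z + 1} (\<lambda>t. x (z - 1) + integral {z - 1..t} g)"
      by (intro continuous_intros indefinite_integral_continuous_1 gi)
    moreover have "x (z - 1) + integral {z - 1..t} g = x t" if "t \<in> {z - 1..z + 1}" for t
      using that weak_deriv_loc_diff[OF wd, of "z - 1" t]
        set_borel_integral_eq_integral(2)[OF weak_deriv_loc_integrable[OF wd, of "z - 1" t]]
      by simp
    ultimately have "continuous_on {z - 1..z + 1} x"
      by (rule continuous_on_eq)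
    then have "continuous_on {z - 1<..<z + 1} x"
      by (rule continuous_on_subset) auto
    then show ?thesis
      by (subst (asm) continuous_on_eq_continuous_at) auto
  qed
  then show ?thesis by (simp add: continuous_at_imp_continuous_on)
qed

lemma continuous_crossing_interval:
  fixes x :: "real \<Rightarrow> real"
  assumes c: "continuous_on UNIV x" and u: "x u \<le> \<alpha>" and w: "\<beta> \<le> x w"
    and "\<alpha> < \<beta>" and "u \<le> w"
  shows "\<exists>p q. p < q \<and> x p \<le> \<alpha> \<and> \<beta> \<le> x q \<and> (\<forall>r\<in>{p<..<q}. \<alpha> < x r \<and> x r < \<beta>)"
proof -
  have ca: "\<And>z. isCont x z" using c by (simp add: continuous_on_eq_continuous_at)
  let ?S = "{u..w} \<inter> x -` {..\<alpha>}"
  have "compact ?S"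
    by (intro compact_Int_closed compact_Icc continuous_closed_vimage ca closed_atMost)
  moreover have "u \<in> ?S" using u \<open>u \<le> w\<close> by auto
  ultimately obtain p where p: "p \<in> ?S" and pmax: "\<And>r. r \<in> ?S \<Longrightarrow> r \<le> p"
    using compact_attains_sup[of ?S] by blast
  let ?T = "{p..w} \<inter> x -` {\<beta>..}"
  have "compact ?T"
    by (intro compact_Int_closed compact_Icc continuous_closed_vimage ca closed_atLeast)
  moreover have "w \<in> ?T" using p w by auto
  ultimately obtain q where q: "q \<in> ?T" and qmin: "\<And>r. r \<in> ?T \<Longrightarrow> q \<le> r"
    using compact_attains_inf[of ?T] by blast
  have "p < q" using p q \<open>\<alpha> < \<beta>\<close> by (cases "p = q") auto
  moreover have "\<alpha> < x r \<and> x r < \<beta>" if "r \<in> {p<..<q}" for r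
    using that p q pmax[of r] qmin[of r] by fastforce
  ultimately show ?thesis using p q by blast
qed

lemma inW_transition_interval:
  assumes W: "inW x g"
  shows "\<exists>p q. p < q \<and> 1 \<le> \<bar>x q - x p\<bar> \<and> (\<forall>r\<in>{p<..<q}. \<bar>x r\<bar> < 1/2)"
proof -
  have xc: "continuous_on UNIV x"
    using W weak_deriv_loc_continuous unfolding inW_def by blast
  obtain u where "\<bar>x u + 1\<bar> < 1/2"
    using square_integrable_takes_small_values[of "{..0}" "\<lambda>t. x t + 1" "1/2"] W
    by (auto simp: inW_def emeasure_lborel_atMost)
  then have u: "x u \<le> -1/2" by linarith
  obtain w where "\<bar>x w - 1\<bar> < 1/2"
    using square_integrable_takes_small_values[of "{0..}" "\<lambda>t. x t - 1" "1/2"] W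
    by (auto simp: inW_def emeasure_lborel_atLeast)
  then have w: "1/2 \<le> x w" by linarith
  show ?thesis
  proof (cases "u \<le> w")
    case True
    then obtain p q where "p < q" "x p \<le> -1/2" "1/2 \<le> x q"
      and "\<forall>r\<in>{p<..<q}. -1/2 < x r \<and> x r < 1/2"
      using continuous_crossing_interval[OF xc u w] by auto
    then show ?thesis by (intro exI[of _ p] exI[of _ q]) auto
  next
    case False
    have "continuous_on UNIV (\<lambda>t. - x t)" by (intro continuous_intros xc)
    from continuous_crossing_interval[OF this, of w "-1/2" "1/2" u]
    obtain p q where "p < q" "x p \<ge> 1/2" "-1/2 \<ge> x q"
      and "\<forall>r\<in>{p<..<q}. -1/2 < - x r \<and> - x r < 1/2"
      using w u False by auto
    then show ?thesis by (intro exI[of _ p] exI[of _ q]) auto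
  qed
qed

definition kinetic :: "(real \<Rightarrow> real) \<Rightarrow> ennreal" where
  "kinetic g = (\<integral>\<^sup>+t. ennreal ((g t)\<^sup>2 / 2) \<partial>lborel)"

definition potential :: "(real \<Rightarrow> real) \<Rightarrow> (real \<Rightarrow> real) \<Rightarrow> ennreal" where
  "potential V x = (\<integral>\<^sup>+t. ennreal (V (x t)) \<partial>lborel)"

lemma kinetic_lower_bound:
  assumes wd: "weak_deriv_loc x g" and "p < q"
  shows "ennreal ((x q - x p)\<^sup>2 / (2 * (q - p))) \<le> kinetic g"
proof -
  define d where "d = \<bar>x q - x p\<bar>"
  define L where "L = q - p"
  have L: "L > 0" using \<open>p < q\<close> by (simp add: L_def)
  have gi: "set_integrable lborel {p..q} g"
    using weak_deriv_loc_integrable[OF wd] \<open>p < q\<close> by simp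
  have g2i: "set_integrable lborel {p..q} (\<lambda>t. (g t)\<^sup>2 / 2)"
    using weak_deriv_loc_square_integrable[OF wd] \<open>p < q\<close> by (simp add: set_integrable_divide)
  have agi: "set_integrable lborel {p..q} (\<lambda>t. \<bar>g t\<bar>)"
    using set_integrable_norm[OF gi] by simp
  have ci: "set_integrable lborel {p..q} (\<lambda>t. d\<^sup>2 / (2 * L\<^sup>2))"
    by (rule borel_integrable_atLeastAtMost') simp
  have d_le: "d \<le> (LINT t:{p..q}|lborel. \<bar>g t\<bar>)"
    using weak_deriv_loc_diff[OF wd, of p q] set_integral_norm_bound[OF gi] \<open>p < q\<close>
    by (simp add: d_def)
  \<comment> \<open>Completing the square: \<open>(\<bar>g\<bar> - d/L)\<^sup>2 \<ge> 0\<close> on an interval of length \<open>L\<close>.\<close>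
  have "d\<^sup>2 / (2 * L) = (d / L) * d - d\<^sup>2 / (2 * L\<^sup>2) * L"
    using L by (simp add: field_simps power2_eq_square)
  also have "\<dots> \<le> (d / L) * (LINT t:{p..q}|lborel. \<bar>g t\<bar>) - d\<^sup>2 / (2 * L\<^sup>2) * L"
    using d_le L by (intro diff_right_mono mult_left_mono) (auto simp: d_def)
  also have "\<dots> = (LINT t:{p..q}|lborel. (d / L) * \<bar>g t\<bar> - d\<^sup>2 / (2 * L\<^sup>2))"
    using \<open>p < q\<close> agi ci by (simp add: set_integral_diff set_integral_const L_def)
  also have "\<dots> \<le> (LINT t:{p..q}|lborel. (g t)\<^sup>2 / 2)"
  proof (rule set_integral_mono)
    show "set_integrable lborel {p..q} (\<lambda>t. d / L * \<bar>g t\<bar> - d\<^sup>2 / (2 * L\<^sup>2))"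
      using agi ci by (intro set_integral_diff(1)) (auto simp: set_integrable_mult_right)
    show "set_integrable lborel {p..q} (\<lambda>t. (g t)\<^sup>2 / 2)" by (rule g2i)
    fix t
    have "0 \<le> (\<bar>g t\<bar> - d / L)\<^sup>2 / 2" by simp
    also have "\<dots> = (g t)\<^sup>2 / 2 - (d / L * \<bar>g t\<bar> - d\<^sup>2 / (2 * L\<^sup>2))"
      using L by (simp add: power2_eq_square field_simps)
    finally show "d / L * \<bar>g t\<bar> - d\<^sup>2 / (2 * L\<^sup>2) \<le> (g t)\<^sup>2 / 2" by simp
  qed
  finally have "d\<^sup>2 / (2 * L) \<le> (LINT t:{p..q}|lborel. (g t)\<^sup>2 / 2)" .
  then have "ennreal (d\<^sup>2 / (2 * L)) \<le> ennreal (LINT t:{p..q}|lborel. (g t)\<^sup>2 / 2)"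
    by (rule ennreal_leI)
  also have "\<dots> = (\<integral>\<^sup>+t. ennreal (indicator {p..q} t * ((g t)\<^sup>2 / 2)) \<partial>lborel)"
    using g2i unfolding set_lebesgue_integral_def set_integrable_def
    by (subst nn_integral_eq_integral) (auto simp: indicator_def)
  also have "\<dots> \<le> kinetic g"
    unfolding kinetic_def by (intro nn_integral_mono ennreal_leI) (auto simp: indicator_def)
  finally show ?thesis by (simp add: d_def L_def)
qed

lemma kinetic_potential_product_lower_bound:
  assumes W: "inW x g" and Vm: "\<And>y. \<bar>y\<bar> < 1/2 \<Longrightarrow> m \<le> V y"
  shows "ennreal (m / 2) \<le> kinetic g * potential V x"
proof -
  obtain p q where "p < q" and jump: "1 \<le> \<bar>x q - x p\<bar>" and inner: "\<forall>r\<in>{p<..<q}. \<bar>x r\<bar> < 1/2"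
    using inW_transition_interval[OF W] by blast
  define L where "L = q - p"
  have L: "L > 0" using \<open>p < q\<close> by (simp add: L_def)
  have "1 \<le> \<bar>x q - x p\<bar>\<^sup>2"
    using power_mono[OF jump, of 2] by simp
  then have "1 / (2 * L) \<le> (x q - x p)\<^sup>2 / (2 * L)"
    using L by (intro divide_right_mono) auto
  then have K: "ennreal (1 / (2 * L)) \<le> kinetic g"
    using kinetic_lower_bound[OF _ \<open>p < q\<close>] W unfolding inW_def L_def
    by (meson ennreal_leI order_trans)
  have "ennreal (m * L) = (\<integral>\<^sup>+t. ennreal m * indicator {p<..<q} t \<partial>lborel)"
    using L by (simp add: nn_integral_cmult_indicator ennreal_mult'' L_def)
  also have "\<dots> \<le> potential V x"
    unfolding potential_def
    by (intro nn_integral_mono) (auto simp: indicator_def intro!: ennreal_leI Vm inner[rule_format])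
  finally have P: "ennreal (m * L) \<le> potential V x" .
  have factor: "m / 2 = 1 / (2 * L) * (m * L)" using L by simp
  have "ennreal (m / 2) = ennreal (1 / (2 * L)) * ennreal (m * L)"
    unfolding factor using L by (intro ennreal_mult') simp
  also have "\<dots> \<le> kinetic g * potential V x"
    using K P by (rule mult_mono) auto
  finally show ?thesis .
qed

lemma set_integrable_bounded_on_interval:
  fixes f :: "real \<Rightarrow> real"
  assumes "f \<in> borel_measurable borel" "A \<in> sets borel"
    and bound: "\<And>t. t \<in> A \<Longrightarrow> \<bar>f t\<bar> \<le> C * indicator {l..u} t"
  shows "set_integrable lborel A f"
  unfolding set_integrable_def
proof (rule Bochner_Integration.integrable_bound)
  show "integrable lborel (\<lambda>t::real. indicator {l..u} t *\<^sub>R C)"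
    by (simp add: emeasure_lborel_Icc_eq)
  show "(\<lambda>t. indicator A t *\<^sub>R f t) \<in> borel_measurable lborel" using assms by simp
  show "AE t in lborel. norm (indicator A t *\<^sub>R f t) \<le> norm (indicator {l..u} t *\<^sub>R C)"
  proof (rule AE_I2)
    fix t
    show "norm (indicator A t *\<^sub>R f t) \<le> norm (indicator {l..u} t *\<^sub>R C)"
      using bound[of t] by (cases "t \<in> A") (auto simp: indicator_def split: if_splits)
  qed
qed

definition ramp :: "real \<Rightarrow> real" where
  "ramp t = max (-1) (min 1 t)"

lemma ramp_diff:
  "s \<le> t \<Longrightarrow> ramp t - ramp s = (if max s (-1) \<le> min t 1 then min t 1 - max s (-1) else 0)"
  by (cases "s \<le> -1"; cases "s \<le> 1"; cases "t \<le> -1"; cases "t \<le> 1") (simp_all add: ramp_def)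

lemma weak_deriv_loc_ramp: "weak_deriv_loc ramp (indicator {-1..1})"
  unfolding weak_deriv_loc_def
proof (intro conjI allI impI)
  fix s t :: real assume "s \<le> t"
  show "set_integrable lborel {s..t} (\<lambda>u. (indicator {-1..1} u :: real)\<^sup>2)"
    by (rule set_integrable_bounded_on_interval[where C=1]) (auto simp: indicator_def)
  have "(LBINT u=s..t. indicator {-1..1} u) = measure lborel ({s..t} \<inter> {-1..1})"
    using \<open>s \<le> t\<close> unfolding interval_integral_Icc[OF \<open>s \<le> t\<close>] set_lebesgue_integral_def
    by (simp flip: indicator_inter_arith)
  also have "\<dots> = ramp t - ramp s"
    using \<open>s \<le> t\<close> by (simp add: Int_atLeastAtMost ramp_diff measure_def emeasure_lborel_Icc_eq)
  finally show "ramp t - ramp s = (LBINT u=s..t. indicator {-1..1} u)" by simp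
qed simp

lemma inW_ramp: "inW ramp (indicator {-1..1})"
  unfolding inW_def
proof (intro conjI weak_deriv_loc_ramp)
  have "continuous_on UNIV ramp" unfolding ramp_def by (intro continuous_intros)
  then have meas: "(\<lambda>t. (ramp t + c)\<^sup>2) \<in> borel_measurable borel" for c
    by (intro borel_measurable_continuous_onI continuous_intros)
  have "\<bar>ramp t + c\<bar> \<le> 2" if "\<bar>c\<bar> = 1" for t c
    using that by (auto simp: ramp_def)
  then have sq: "(ramp t + c)\<^sup>2 \<le> 4" if "\<bar>c\<bar> = 1" for t c
    using that power_mono[of "\<bar>ramp t + c\<bar>" 2 2] by (simp add: power2_abs)
  have left: "\<bar>(ramp t + 1)\<^sup>2\<bar> \<le> 4 * indicator {-1..1} t" if "t \<le> 0" for t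
    using that sq[of 1 t] by (cases "t < -1") (auto simp: indicator_def ramp_def)
  have right: "\<bar>(ramp t - 1)\<^sup>2\<bar> \<le> 4 * indicator {-1..1} t" if "0 \<le> t" for t
    using that sq[of "-1" t] by (cases "1 < t") (auto simp: indicator_def ramp_def)
  show "set_integrable lborel {..0} (\<lambda>t. (ramp t + 1)\<^sup>2)"
    using left meas[of 1] by (intro set_integrable_bounded_on_interval) auto
  show "set_integrable lborel {0..} (\<lambda>t. (ramp t - 1)\<^sup>2)"
    using right meas[of "-1"] by (intro set_integrable_bounded_on_interval) auto
  show "set_integrable lborel {..0} (\<lambda>t::real. (indicator {-1..1} t :: real)\<^sup>2)"
    by (rule set_integrable_bounded_on_interval[where C=1]) (auto simp: indicator_def)
  show "set_integrable lborel {0..} (\<lambda>t::real. (indicator {-1..1} t :: real)\<^sup>2)"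
    by (rule set_integrable_bounded_on_interval[where C=1]) (auto simp: indicator_def)
qed

lemma inW_potential_measurable:
  assumes "inW x g" "continuous_on UNIV V"
  shows "(\<lambda>t. V (x t)) \<in> borel_measurable borel"
proof -
  have "continuous_on UNIV x" using assms(1) weak_deriv_loc_continuous unfolding inW_def by blast
  then show ?thesis
    by (intro borel_measurable_continuous_onI continuous_on_compose2[OF assms(2)]) auto
qed

lemma action_split:
  assumes W: "inW x g" and "continuous_on UNIV V" and "c \<in> borel_measurable borel"
    and nonneg: "\<And>t. 0 \<le> c t * V (x t)"
  shows "action c V x g = kinetic g + (\<integral>\<^sup>+t. ennreal (c t * V (x t)) \<partial>lborel)"
proof -
  have "g \<in> borel_measurable borel"
    using W weak_deriv_loc_measurable unfolding inW_def by blast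
  moreover have "(\<lambda>t. V (x t)) \<in> borel_measurable borel"
    using inW_potential_measurable assms by blast
  ultimately have "(\<integral>\<^sup>+t. ennreal ((g t)\<^sup>2 / 2) + ennreal (c t * V (x t)) \<partial>lborel)
      = kinetic g + (\<integral>\<^sup>+t. ennreal (c t * V (x t)) \<partial>lborel)"
    using assms(3) unfolding kinetic_def by (intro nn_integral_add) auto
  then show ?thesis
    unfolding action_def using nonneg by (simp add: ennreal_plus)
qed

lemma action_const:
  assumes W: "inW x g" and Vc: "continuous_on UNIV V" and "\<And>y. 0 \<le> V y" and "0 \<le> c"
  shows "action (\<lambda>t. c) V x g = kinetic g + ennreal c * potential V x"
proof -
  have "action (\<lambda>t. c) V x g = kinetic g + (\<integral>\<^sup>+t. ennreal c * ennreal (V (x t)) \<partial>lborel)"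
    using assms by (subst action_split) (auto simp: ennreal_mult)
  also have "\<dots> = kinetic g + ennreal c * potential V x"
    unfolding potential_def using inW_potential_measurable[OF W Vc] by (subst nn_integral_cmult) auto
  finally show ?thesis .
qed

lemma Binf_le_action: "inW x g \<Longrightarrow> Binf c V \<le> action c V x g"
  unfolding Binf_def by (rule INF_lower2[of "(x, g)"]) auto

lemma Binf_less_iff: "Binf c V < y \<longleftrightarrow> (\<exists>x g. inW x g \<and> action c V x g < y)"
  unfolding Binf_def by (auto simp: INF_less_iff)

lemma Binf_mono:
  assumes "\<And>t. c t \<le> d t" and "\<And>y. 0 \<le> V y"
  shows "Binf c V \<le> Binf d V"
  unfolding Binf_def action_def
proof (rule INF_mono)
  fix xg assume "xg \<in> {(x, g). inW x g}"
  then show "\<exists>xg'\<in>{(x, g). inW x g}. (\<integral>\<^sup>+t. ennreal ((snd xg' t)\<^sup>2 / 2 + c t * V (fst xg' t)) \<partial>lborel)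
      \<le> (\<integral>\<^sup>+t. ennreal ((snd xg t)\<^sup>2 / 2 + d t * V (fst xg t)) \<partial>lborel)"
    by (intro bexI[of _ xg] nn_integral_mono ennreal_leI add_left_mono mult_right_mono assms)
qed

lemma Binf_const_finite:
  assumes Vc: "continuous_on UNIV V" and "V (-1) = 0" "V 1 = 0" and "0 \<le> c"
  shows "Binf (\<lambda>t. c) V < \<infinity>"
proof -
  have "\<exists>z\<in>{-1..1::real}. \<forall>y\<in>{-1..1}. V y \<le> V z"
    by (rule continuous_attains_sup) (auto intro: continuous_on_subset[OF Vc])
  then obtain z where zmax: "\<And>y. y \<in> {-1..1} \<Longrightarrow> V y \<le> V z" by blast
  define C where "C = 1/2 + c * V z"
  have "ennreal ((indicator {-1..1} t)\<^sup>2 / 2 + c * V (ramp t)) \<le> ennreal C * indicator {-1..1} t"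
    for t :: real
  proof (cases "t \<in> {-1..1}")
    case True
    then have "c * V (ramp t) \<le> c * V z"
      using zmax \<open>0 \<le> c\<close> by (intro mult_left_mono) (auto simp: ramp_def)
    then have "(indicator {-1..1} t)\<^sup>2 / 2 + c * V (ramp t) \<le> C"
      using True by (simp add: C_def)
    then show ?thesis using True by (simp add: ennreal_leI)
  next
    case False
    then have "ramp t = -1 \<or> ramp t = 1" by (auto simp: ramp_def)
    then have "V (ramp t) = 0" using assms(2,3) by auto
    then show ?thesis using False by simp
  qed
  then have "action (\<lambda>t. c) V ramp (indicator {-1..1}) \<le> (\<integral>\<^sup>+t. ennreal C * indicator {-1..1::real} t \<partial>lborel)"
    unfolding action_def by (intro nn_integral_mono)
  also have "\<dots> = ennreal C * 2"
    by (simp add: nn_integral_cmult_indicator emeasure_lborel_Icc_eq)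
  also have "\<dots> < \<infinity>" by (simp add: ennreal_mult_less_top)
  finally show ?thesis
    using Binf_le_action[OF inW_ramp] by (rule order.strict_trans1[rotated])
qed

lemma Binf_const_strict_mono:
  assumes Vc: "continuous_on UNIV V" and Vnn: "\<And>y. 0 \<le> V y" and "V (-1) = 0" "V 1 = 0"
    and "0 < m" and Vm: "\<And>y. \<bar>y\<bar> < 1/2 \<Longrightarrow> m \<le> V y"
    and "0 \<le> c0" and "c0 < c1"
  shows "Binf (\<lambda>t. c0) V < Binf (\<lambda>t. c1) V"
proof -
  obtain b where b: "Binf (\<lambda>t. c1) V = ennreal b" "0 \<le> b"
    using Binf_const_finite[OF Vc \<open>V (-1) = 0\<close> \<open>V 1 = 0\<close>, of c1] \<open>0 \<le> c0\<close> \<open>c0 < c1\<close>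
    by (cases "Binf (\<lambda>t. c1) V") auto
  define \<eta> where "\<eta> = (c1 - c0) * m / (2 * (b + 1))"
  define \<delta> where "\<delta> = min 1 (\<eta> / 2)"
  have "0 < \<eta>" using \<open>0 < m\<close> \<open>c0 < c1\<close> b by (simp add: \<eta>_def)
  then have "0 < \<delta>" by (simp add: \<delta>_def)
  then obtain x g where W: "inW x g" and near: "action (\<lambda>t. c1) V x g < ennreal (b + \<delta>)"
    using b Binf_less_iff[of "\<lambda>t. c1" V "ennreal (b + \<delta>)"] by (auto simp: ennreal_lessI)
  have action_eq: "action (\<lambda>t. c) V x g = kinetic g + ennreal c * potential V x" if "0 \<le> c" for c
    using action_const[OF W Vc Vnn that] .
  have "action (\<lambda>t. c1) V x g < \<infinity>"
    using order.strict_trans[OF near ennreal_less_top] by simp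
  then have "kinetic g + ennreal c1 * potential V x < \<infinity>"
    using action_eq[of c1] \<open>0 \<le> c0\<close> \<open>c0 < c1\<close> by simp
  then have "kinetic g < \<infinity>" "ennreal c1 * potential V x < \<infinity>"
    by (auto simp: less_top[symmetric])
  then obtain k v where k: "kinetic g = ennreal k" "0 \<le> k" and v: "potential V x = ennreal v" "0 \<le> v"
    using \<open>0 \<le> c0\<close> \<open>c0 < c1\<close> by (cases "kinetic g"; cases "potential V x") (auto simp: ennreal_mult_less_top)
  have "k + c1 * v < b + \<delta>"
    using near action_eq[of c1] k v \<open>0 \<le> c0\<close> \<open>c0 < c1\<close> \<open>0 < \<delta>\<close> b
    by (simp add: ennreal_mult[symmetric] ennreal_plus[symmetric] ennreal_less_iff del: ennreal_plus)
  moreover have "0 \<le> c1 * v" using \<open>0 \<le> c0\<close> \<open>c0 < c1\<close> v by simp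
  ultimately have "k \<le> b + 1" by (simp add: \<delta>_def)
  \<comment> \<open>Near-minimisers have bounded kinetic energy, so they carry a definite amount of potential.\<close>
  have "m / 2 \<le> k * v"
    using kinetic_potential_product_lower_bound[where V=V, OF W Vm] k v by (simp add: ennreal_mult[symmetric])
  also have "\<dots> \<le> (b + 1) * v" using \<open>k \<le> b + 1\<close> v by (intro mult_right_mono)
  finally have "m / (2 * (b + 1)) \<le> v"
    using b by (simp add: field_simps)
  then have "(c1 - c0) * (m / (2 * (b + 1))) \<le> (c1 - c0) * v"
    using \<open>c0 < c1\<close> by (intro mult_left_mono) auto
  then have "\<eta> \<le> (c1 - c0) * v" by (simp add: \<eta>_def)
  then have "k + c0 * v < b"
    using \<open>k + c1 * v < b + \<delta>\<close> \<open>0 < \<eta>\<close> by (simp add: \<delta>_def algebra_simps)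
  then have "action (\<lambda>t. c0) V x g < ennreal b"
    using action_eq[OF \<open>0 \<le> c0\<close>] k v \<open>0 \<le> c0\<close>
    by (simp add: ennreal_mult[symmetric] ennreal_plus[symmetric] ennreal_less_iff del: ennreal_plus)
  then show ?thesis
    using Binf_le_action[OF W] b by (auto intro: order.strict_trans1)
qed

lemma weighted_potential_dilation_tendsto:
  fixes a :: "real \<Rightarrow> real"
  assumes W: "inW x g" and Vc: "continuous_on UNIV V" and Vnn: "\<And>y. 0 \<le> V y"
    and ac: "continuous_on UNIV a" and aM: "\<And>s. \<bar>a s\<bar> \<le> M" and anonneg: "\<And>s. 0 \<le> a s"
    and fin: "potential V x < \<infinity>"
  shows "((\<lambda>e. \<integral>\<^sup>+t. ennreal (a (e * t) * V (x t)) \<partial>lborel) \<longlongrightarrow> ennreal (a 0) * potential V x) (at_right 0)"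
proof -
  have vm: "(\<lambda>t. V (x t)) \<in> borel_measurable borel" by (rule inW_potential_measurable[OF W Vc])
  have am: "a \<in> borel_measurable borel" by (rule borel_measurable_continuous_onI[OF ac])
  have vi: "integrable lborel (\<lambda>t. V (x t))"
    using vm Vnn fin unfolding potential_def by (intro integrableI_nonneg) auto
  then have wi: "integrable lborel (\<lambda>t. M * V (x t))" by simp
  have fm: "(\<lambda>t. a (e * t) * V (x t)) \<in> borel_measurable borel" for e
    using am vm by measurable
  have bound: "norm (a (e * t) * V (x t)) \<le> M * V (x t)" for e t
    using mult_right_mono[OF aM[of "e * t"] Vnn[of "x t"]] Vnn[of "x t"] by (simp add: abs_mult)
  have fi: "integrable lborel (\<lambda>t. a (e * t) * V (x t))" for e
    using fm order_trans[OF bound abs_ge_self]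
    by (intro Bochner_Integration.integrable_bound[OF wi] AE_I2) auto
  have lim: "((\<lambda>e. \<integral>t. a (e * t) * V (x t) \<partial>lborel) \<longlongrightarrow> (\<integral>t. a 0 * V (x t) \<partial>lborel)) (at_right 0)"
  proof (rule tendsto_at_right_sequentially[of 0 1])
    fix S :: "nat \<Rightarrow> real" assume S: "S \<longlonglongrightarrow> 0"
    have "(\<lambda>i. a (S i * t)) \<longlonglongrightarrow> a (0 * t)" for t
      using ac by (intro isCont_tendsto_compose[of "0 * t" a] tendsto_intros S)
        (simp add: continuous_on_eq_continuous_at)
    then show "(\<lambda>n. \<integral>t. a (S n * t) * V (x t) \<partial>lborel) \<longlonglongrightarrow> (\<integral>t. a 0 * V (x t) \<partial>lborel)"
      using fm vm wi bound
      by (intro integral_dominated_convergence[where w="\<lambda>t. M * V (x t)"] AE_I2 tendsto_intros) auto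
  qed simp
  have "(\<integral>\<^sup>+t. ennreal (a (e * t) * V (x t)) \<partial>lborel) = ennreal (\<integral>t. a (e * t) * V (x t) \<partial>lborel)" for e
    using fi anonneg Vnn by (intro nn_integral_eq_integral) auto
  moreover have "ennreal (a 0) * potential V x = ennreal (\<integral>t. a 0 * V (x t) \<partial>lborel)"
    using nn_integral_eq_integral[OF vi] Vnn anonneg[of 0] unfolding potential_def by (simp add: ennreal_mult)
  ultimately show ?thesis
    using tendsto_ennrealI[OF lim] by simp
qed

lemma Binf_dilation_tendsto:
  fixes a :: "real \<Rightarrow> real"
  assumes Vc: "continuous_on UNIV V" and Vnn: "\<And>y. 0 \<le> V y"
    and ac: "continuous_on UNIV a" and "bounded (range a)"
    and a_min: "\<And>s. a 0 \<le> a s" and "0 < a 0"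
  shows "((\<lambda>e. Binf (\<lambda>t. a (e * t)) V) \<longlongrightarrow> Binf (\<lambda>t. a 0) V) (at_right 0)"
proof (rule order_tendstoI)
  fix y assume "y < Binf (\<lambda>t. a 0) V"
  moreover have "Binf (\<lambda>t. a 0) V \<le> Binf (\<lambda>t. a (e * t)) V" for e
    using a_min Vnn by (rule Binf_mono)
  ultimately show "\<forall>\<^sub>F e in at_right 0. y < Binf (\<lambda>t. a (e * t)) V"
    by (auto intro: always_eventually order.strict_trans2)
next
  fix y assume "Binf (\<lambda>t. a 0) V < y"
  then obtain x g where W: "inW x g" and near: "action (\<lambda>t. a 0) V x g < y"
    by (auto simp: Binf_less_iff)
  obtain M where aM: "\<And>s. \<bar>a s\<bar> \<le> M"
    using \<open>bounded (range a)\<close> unfolding bounded_iff by auto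
  have anonneg: "0 \<le> a s" for s using a_min[of s] \<open>0 < a 0\<close> by linarith
  have action0: "action (\<lambda>t. a 0) V x g = kinetic g + ennreal (a 0) * potential V x"
    using action_const[OF W Vc Vnn anonneg] .
  have "ennreal (a 0) * potential V x \<le> action (\<lambda>t. a 0) V x g"
    unfolding action0 by (rule add_increasing) simp_all
  also have "\<dots> < \<infinity>"
    using order.strict_trans2[OF near top_greatest] by simp
  finally have "ennreal (a 0) * potential V x < \<infinity>" .
  then have "potential V x < \<infinity>"
    using \<open>0 < a 0\<close> by (auto simp: ennreal_mult_less_top)
  then have "((\<lambda>e. \<integral>\<^sup>+t. ennreal (a (e * t) * V (x t)) \<partial>lborel) \<longlongrightarrow> ennreal (a 0) * potential V x) (at_right 0)"
    by (rule weighted_potential_dilation_tendsto[OF W Vc Vnn ac aM anonneg])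
  moreover have "action (\<lambda>t. a (e * t)) V x g = kinetic g + (\<integral>\<^sup>+t. ennreal (a (e * t) * V (x t)) \<partial>lborel)" for e
  proof (rule action_split[OF W Vc])
    show "(\<lambda>t. a (e * t)) \<in> borel_measurable borel"
      using borel_measurable_continuous_onI[OF ac] by measurable
  qed (simp add: anonneg Vnn)
  ultimately have "((\<lambda>e. action (\<lambda>t. a (e * t)) V x g) \<longlongrightarrow> action (\<lambda>t. a 0) V x g) (at_right 0)"
    unfolding action0 by (simp add: tendsto_add)
  then have "\<forall>\<^sub>F e in at_right 0. action (\<lambda>t. a (e * t)) V x g < y"
    using near by (rule order_tendstoD(2))
  then show "\<forall>\<^sub>F e in at_right 0. Binf (\<lambda>t. a (e * t)) V < y"
    by eventually_elim (rule order.strict_trans1[OF Binf_le_action[OF W]])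
qed

theorem lemma3p1:
  fixes V V' V'' a :: "real \<Rightarrow> real" and a_inf :: real
  assumes V1: "\<And>x. (V has_real_derivative V' x) (at x)"
    and V2: "\<And>x. (V' has_real_derivative V'' x) (at x)"
    and V3: "continuous_on UNIV V''"
    and Vnn: "\<And>x. V x \<ge> 0"
    and Vzero: "V (-1) = 0" "V 1 = 0"
    and Vpos_in: "\<And>x. -1 < x \<Longrightarrow> x < 1 \<Longrightarrow> V x > 0"
    and Vpp: "V'' (-1) > 0" "V'' 1 > 0"
    and Vout: "\<And>x. \<bar>x\<bar> > 1 \<Longrightarrow> V x > 0 \<and> V' x * x > 0"
    and Vinf: "filterlim V at_top at_infinity"
    and a_bdd: "bounded (range a)"
    and a_cont: "continuous_on UNIV a"
    and a_liminf: "Liminf at_infinity (\<lambda>t. ereal (a t)) = ereal a_inf"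
    and a_inf_gt: "a_inf > (INF t. a t)"
    and a_min: "(INF t. a t) = a 0"
    and a0_pos: "a 0 > 0"
  shows "Binf (\<lambda>t. a 0) V < Binf (\<lambda>t. a_inf) V \<and>
         ((\<lambda>e. Binf (\<lambda>t. a (e * t)) V) \<longlongrightarrow> Binf (\<lambda>t. a 0) V) (at_right 0)"
proof
  have Vc: "continuous_on UNIV V"
    using V1 DERIV_isCont by (blast intro: continuous_at_imp_continuous_on)
  obtain z where "z \<in> {-1/2..1/2}" and zmin: "\<And>y. y \<in> {-1/2..1/2} \<Longrightarrow> V z \<le> V y"
    using continuous_attains_inf[of "{-1/2..1/2::real}" V] continuous_on_subset[OF Vc] by auto
  then have "0 < V z" by (intro Vpos_in) auto
  moreover have "V z \<le> V y" if "\<bar>y\<bar> < 1/2" for y using that by (intro zmin) auto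
  ultimately show "Binf (\<lambda>t. a 0) V < Binf (\<lambda>t. a_inf) V"
    using a_inf_gt a_min a0_pos by (intro Binf_const_strict_mono[OF Vc Vnn Vzero]) auto
  have "a 0 \<le> a s" for s
    using cINF_lower[OF bounded_imp_bdd_below[OF a_bdd], of s] a_min by simp
  then show "((\<lambda>e. Binf (\<lambda>t. a (e * t)) V) \<longlongrightarrow> Binf (\<lambda>t. a 0) V) (at_right 0)"
    using Binf_dilation_tendsto[OF Vc Vnn a_cont a_bdd] a0_pos by blast
qed

end
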